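(* In the colored-tree setting below, for every color $c\in C$ the map $f_c:V\to T_c$ satisfies $\mathcal L(f_c(v),f_c(v'))\le2|vv'|$ for all $v,v'\in V$.
   Context: Let $(Z,d)$ be a bounded metric space with at least two points. Hyperbolic approximation with parameter $r\in(0,1/6]$: $k_0$ is the largest integer with $\operatorname{diam}Z<r^{k_0}$; for each integer $k\ge k_0$, $V_k\subset Z$ is a maximal $r^k$-separated subset; vertex set $V=\bigsqcup_{k\ge k_0}V_k$ (disjoint union) with level $\ell(v)=k$ for $v\in V_k$, open ball $B(v)=\{z:d(z,v)<2r^k\}$, closure $\overline B(v)$; edges join equal-level vertices with $\overline B(v)\cap\overline B(v')\ne\emptyset$ (horizontal) and vertices on adjacent levels whose higher-level ball is contained in the lower-level ball (radial); $|vv'|$ is the path metric with unit edges; the unique vertex of $V_{k_0}$ is the root. Colored-tree setting: assume $\operatorname{cdim}Z=n<\infty$, $r<\min\{\operatorname{diam}Z,1/\operatorname{diam}Z\}$ (so $k_0\in\{0,-1\}$), and $(\mathcal U_j)_{j\ge0}$ is a sequence of open coverings of $Z$, each $\mathcal U_j=\bigcup_{c\in C}\mathcal U_j^c$ with $|C|=n+1$ and each $\mathcal U_j^c$ consisting of pairwise disjoint open sets, such that: (1) $\mathcal U_0^c=\{Z\}$ for all $c$ and $\sup_{U\in\mathcal U_j}\operatorname{diam}U<r^j$ for $j\ge1$; (2) for every $v\in V_{j+1}$, $j\ge0$, some $U\in\mathcal U_j$ contains $B(v)$; (3) for every $c$ and different $U\in\mathcal U_j^c$, $U'\in\mathcal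 U_{j'}^c$ with $j'\le j$, the set $B(U)=\bigcup\{B(v):v\in V_{j+1},B(v)\cap U\ne\emptyset\}$ satisfies $B(U)\subset U'$ or $B(U)\cap U'=\emptyset$. For $c\in C$, $T_c$ is the tree with vertex set $\bigsqcup_{j\ge0}\mathcal U_j^c$ (an element of $\mathcal U_j^c$ is a vertex of level $j$; the element $Z\in\mathcal U_0^c$ is the root $v_c$); a vertex $U'$ of level $j'$ is an ancestor of a vertex $U$ of level $j$ if $j'<j$ and $U\subset U'$; $U$ and $U'$ are joined by an edge iff one is an ancestor of the other and its level is maximal among the levels of ancestors of the other. $\mathcal L$ is the path metric on $T_c$ with unit edges; $T_{c,i}=\mathcal U_i^c$. The map $f_c:V\to T_c$ sends the root of $X$ to $v_c$ and $v\in V_j$, $j>k_0$, to the element $U\in\mathcal U_{j'}^c$ with $B(v)\subset U$ and $j'\le\max\{j-1,0\}$ maximal with this property (well-defined by (3)). *)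

theory Defs
  imports "HOL-Analysis.Analysis"
begin

definition cdim_le :: "'a::metric_space set \<Rightarrow> nat \<Rightarrow> bool" where
  "cdim_le Z n \<longleftrightarrow> (\<exists>\<tau>>0. \<exists>\<delta>0>0. \<forall>\<delta>. 0 < \<delta> \<and> \<delta> < \<delta>0 \<longrightarrow>
     (\<exists>\<U>. (\<forall>U\<in>\<U>. openin (top_of_set Z) U) \<and> \<Union>\<U> = Z
        \<and> (\<forall>U\<in>\<U>. diameter U \<le> \<delta>)
        \<and> (\<forall>x\<in>Z. finite {U\<in>\<U>. x \<in> U} \<and> card {U\<in>\<U>. x \<in> U} \<le> n + 1)
        \<and> (\<forall>x\<in>Z. \<forall>s. s < \<tau> * \<delta> \<longrightarrow> (\<exists>U\<in>\<U>. ball x s \<inter> Z \<subseteq> U))))"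

definition has_cdim :: "'a::metric_space set \<Rightarrow> nat \<Rightarrow> bool" where
  "has_cdim Z n \<longleftrightarrow> cdim_le Z n \<and> (\<forall>m<n. \<not> cdim_le Z m)"

definition separated :: "real \<Rightarrow> 'a::metric_space set \<Rightarrow> bool" where
  "separated s A \<longleftrightarrow> (\<forall>x\<in>A. \<forall>y\<in>A. x \<noteq> y \<longrightarrow> s \<le> dist x y)"

definition maximal_separated :: "'a::metric_space set \<Rightarrow> real \<Rightarrow> 'a set \<Rightarrow> bool" where
  "maximal_separated Z s A \<longleftrightarrow> A \<subseteq> Z \<and> separated s A \<and>
     (\<forall>B. A \<subseteq> B \<and> B \<subseteq> Z \<and> separated s B \<longrightarrow> B = A)"

definition hyp_k0 :: "'a::metric_space set \<Rightarrow> real \<Rightarrow> int" where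
  "hyp_k0 Z r = (GREATEST k::int. diameter Z < r powi k)"

definition hball :: "'a::metric_space set \<Rightarrow> real \<Rightarrow> int \<Rightarrow> 'a \<Rightarrow> 'a set" where
  "hball Z r k v = {z\<in>Z. dist z v < 2 * r powi k}"

definition hyp_vertices :: "'a::metric_space set \<Rightarrow> real \<Rightarrow> (int \<Rightarrow> 'a set) \<Rightarrow> (int \<times> 'a) set" where
  "hyp_vertices Z r V = {(k, v). hyp_k0 Z r \<le> k \<and> v \<in> V k}"

definition hyp_adj :: "'a::metric_space set \<Rightarrow> real \<Rightarrow> (int \<Rightarrow> 'a set) \<Rightarrow> int \<times> 'a \<Rightarrow> int \<times> 'a \<Rightarrow> bool" where
  "hyp_adj Z r V x y \<longleftrightarrow> x \<in> hyp_vertices Z r V \<and> y \<in> hyp_vertices Z r V \<and> x \<noteq> y \<and>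
     ((fst x = fst y \<and> Z \<inter> closure (hball Z r (fst x) (snd x)) \<inter> closure (hball Z r (fst y) (snd y)) \<noteq> {})
      \<or> (fst y = fst x + 1 \<and> hball Z r (fst y) (snd y) \<subseteq> hball Z r (fst x) (snd x))
      \<or> (fst x = fst y + 1 \<and> hball Z r (fst x) (snd x) \<subseteq> hball Z r (fst y) (snd y)))"

definition graph_dist :: "('b \<Rightarrow> 'b \<Rightarrow> bool) \<Rightarrow> 'b \<Rightarrow> 'b \<Rightarrow> nat" where
  "graph_dist adj x y = (LEAST n. (adj ^^ n) x y)"

definition tree_vertices :: "(nat \<Rightarrow> 'c \<Rightarrow> 'a set set) \<Rightarrow> 'c \<Rightarrow> (nat \<times> 'a set) set" where
  "tree_vertices \<U> c = {(j, U). U \<in> \<U> j c}"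

definition tree_ancestor :: "(nat \<Rightarrow> 'c \<Rightarrow> 'a set set) \<Rightarrow> 'c \<Rightarrow> nat \<times> 'a set \<Rightarrow> nat \<times> 'a set \<Rightarrow> bool" where
  "tree_ancestor \<U> c a b \<longleftrightarrow> a \<in> tree_vertices \<U> c \<and> b \<in> tree_vertices \<U> c \<and>
     fst a < fst b \<and> snd b \<subseteq> snd a"

definition tree_adj :: "(nat \<Rightarrow> 'c \<Rightarrow> 'a set set) \<Rightarrow> 'c \<Rightarrow> nat \<times> 'a set \<Rightarrow> nat \<times> 'a set \<Rightarrow> bool" where
  "tree_adj \<U> c a b \<longleftrightarrow>
     (tree_ancestor \<U> c a b \<and> (\<forall>a'. tree_ancestor \<U> c a' b \<longrightarrow> fst a' \<le> fst a)) \<or>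
     (tree_ancestor \<U> c b a \<and> (\<forall>b'. tree_ancestor \<U> c b' a \<longrightarrow> fst b' \<le> fst b))"

definition bigB :: "'a::metric_space set \<Rightarrow> real \<Rightarrow> (int \<Rightarrow> 'a set) \<Rightarrow> nat \<Rightarrow> 'a set \<Rightarrow> 'a set" where
  "bigB Z r V j U = \<Union>{hball Z r (int j + 1) v | v. v \<in> V (int j + 1) \<and> hball Z r (int j + 1) v \<inter> U \<noteq> {}}"

definition fmap :: "'a::metric_space set \<Rightarrow> real \<Rightarrow> (nat \<Rightarrow> 'c \<Rightarrow> 'a set set) \<Rightarrow> 'c \<Rightarrow> int \<times> 'a \<Rightarrow> nat \<times> 'a set" where
  "fmap Z r \<U> c x =
     (if fst x = hyp_k0 Z r then (0, Z)
      else (let j' = (GREATEST j'::nat. int j' \<le> max (fst x - 1) 0 \<and>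
                        (\<exists>U\<in>\<U> j' c. hball Z r (fst x) (snd x) \<subseteq> U))
            in (j', THE U. U \<in> \<U> j' c \<and> hball Z r (fst x) (snd x) \<subseteq> U)))"

end

theory Submission
  imports Defs
begin

(* Each edge of the hyperbolic approximation is mapped by f_c to a pair of vertices at
   distance at most 2 in T_c; as the approximation is connected, the bound follows by
   mapping a geodesic.
   The nesting condition (3) makes the members of the coverings laminar: two of them are
   disjoint or nested, the deeper one strictly inside, so the ancestors of a vertex of T_c
   are exactly the members containing it.  For an edge vw with f_c(v) = (a, X),
   f_c(w) = (b, Y) and a \<le> b, the ball B(v) lies in B(W) for every ancestor W of Y; by (3)
   and the maximality in the definition of f_c, at most one level strictly between a and b
   carries an ancestor of Y.  If X and Y are disjoint, which happens only for horizontal edges,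
   the parent of Y is also the parent of X. *)

lemma relpowp_map_le:
  assumes "(R ^^ n) x y"
    and step: "\<And>u v. R u v \<Longrightarrow> \<exists>m\<le>k. (S ^^ m) (f u) (f v)"
  shows "\<exists>m\<le>k * n. (S ^^ m) (f x) (f y)"
  using assms(1)
proof (induction n arbitrary: y)
  case 0
  then show ?case by auto
next
  case (Suc n)
  then obtain z where z: "(R ^^ n) x z" "R z y" by (auto elim: relpowp_Suc_E)
  obtain m where m: "m \<le> k * n" "(S ^^ m) (f x) (f z)" using Suc.IH[OF z(1)] by blast
  obtain m' where m': "m' \<le> k" "(S ^^ m') (f z) (f y)" using step[OF z(2)] by blast
  have "(S ^^ (m + m')) (f x) (f y)" using m m' by (auto simp: relpowp_add)
  moreover have "m + m' \<le> k * Suc n" using m m' by simp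
  ultimately show ?case by blast
qed

lemma graph_dist_le: "(S ^^ m) x y \<Longrightarrow> graph_dist S x y \<le> m"
  unfolding graph_dist_def by (rule Least_le)

lemma relpowp_graph_dist: "(R\<^sup>*\<^sup>*) x y \<Longrightarrow> (R ^^ graph_dist R x y) x y"
  unfolding graph_dist_def rtranclp_power by (rule LeastI_ex)

lemma graph_dist_map_le:
  assumes "(R\<^sup>*\<^sup>*) x y"
    and "\<And>u v. R u v \<Longrightarrow> \<exists>m\<le>k. (S ^^ m) (f u) (f v)"
  shows "graph_dist S (f x) (f y) \<le> k * graph_dist R x y"
  using relpowp_map_le[OF relpowp_graph_dist[OF assms(1)] assms(2)] graph_dist_le
  by (meson le_trans)

lemma the_disjoint_member_eq:
  assumes "pairwise disjnt F" "X \<in> F" "S \<subseteq> X" "S \<noteq> {}"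
  shows "(THE U. U \<in> F \<and> S \<subseteq> U) = X"
proof (rule the_equality)
  fix U assume "U \<in> F \<and> S \<subseteq> U"
  with assms show "U = X" unfolding pairwise_def disjnt_def by blast
qed (use assms in blast)

locale hyperbolic_approximation =
  fixes Z :: "'a::metric_space set" and r :: real and V :: "int \<Rightarrow> 'a set"
  assumes bdd: "bounded Z"
    and two: "\<exists>x\<in>Z. \<exists>y\<in>Z. x \<noteq> y"
    and r_pos: "0 < r" and r_le: "r \<le> 1/6"
    and V_max: "\<And>k. hyp_k0 Z r \<le> k \<Longrightarrow> maximal_separated Z (r powi k) (V k)"
    and r_small: "r < min (diameter Z) (1 / diameter Z)"
begin

abbreviation "k0 \<equiv> hyp_k0 Z r"
abbreviation "HB \<equiv> hball Z r"
abbreviation "BB \<equiv> bigB Z r V"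
abbreviation "VX \<equiv> hyp_vertices Z r V"
abbreviation "HADJ \<equiv> hyp_adj Z r V"

lemma powi_pos: "0 < r powi k"
  using r_pos by simp

lemma powi_Suc: "r powi (k + 1) = r * r powi k"
  using r_pos by (simp add: power_int_add_1)

lemma powi_antimono: "m \<le> k \<Longrightarrow> r powi k \<le> r powi m"
  using r_pos r_le by (intro power_int_decreasing) auto

lemma diameter_less_powi_neg1: "diameter Z < r powi -1"
proof -
  have "r * diameter Z < 1"
    using r_small r_pos by (auto simp: field_simps)
  then show ?thesis
    using r_pos by (simp add: power_int_minus field_simps)
qed

lemma hyp_k0_eq: "k0 = (if diameter Z < 1 then 0 else -1)"
  unfolding hyp_k0_def
proof (rule Greatest_equality)
  show "diameter Z < r powi (if diameter Z < 1 then 0 else -1)"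
    using diameter_less_powi_neg1 by simp
  fix k assume k: "diameter Z < r powi k"
  have "r powi k \<le> r powi 1" if "1 \<le> k" using that by (rule powi_antimono)
  moreover have "r powi k \<le> r powi 0" if "0 \<le> k" using that by (rule powi_antimono)
  ultimately show "k \<le> (if diameter Z < 1 then 0 else -1)"
    using k r_small by (fastforce split: if_splits)
qed

lemma k0_le_0: "k0 \<le> 0"
  by (simp add: hyp_k0_eq)

lemma diameter_less_powi_k0: "diameter Z < r powi k0"
  using diameter_less_powi_neg1 by (simp add: hyp_k0_eq)

lemma V_subset: "k0 \<le> k \<Longrightarrow> V k \<subseteq> Z"
  using V_max unfolding maximal_separated_def by blast

lemma V_dense:
  assumes "k0 \<le> k" "z \<in> Z"
  shows "\<exists>u\<in>V k. dist z u < r powi k"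
proof (rule ccontr)
  assume "\<not> ?thesis"
  then have far: "\<forall>u\<in>V k. r powi k \<le> dist z u" by force
  have ms: "maximal_separated Z (r powi k) (V k)" using V_max assms by blast
  have "separated (r powi k) (insert z (V k))"
    using ms far unfolding maximal_separated_def separated_def
    by (auto simp: dist_commute)
  moreover have "insert z (V k) \<subseteq> Z" using ms assms unfolding maximal_separated_def by auto
  ultimately have "z \<in> V k" using ms unfolding maximal_separated_def by blast
  then show False using far powi_pos[of k] by force
qed

lemma V_k0_unique: "v \<in> V k0 \<Longrightarrow> w \<in> V k0 \<Longrightarrow> v = w"
proof (rule ccontr)
  assume v: "v \<in> V k0" and w: "w \<in> V k0" and "v \<noteq> w"
  then have "r powi k0 \<le> dist v w"
    using V_max[of k0] unfolding maximal_separated_def separated_def by blast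
  moreover have "dist v w \<le> diameter Z"
    using diameter_bounded_bound[OF bdd] V_subset[of k0] v w by blast
  ultimately show False using diameter_less_powi_k0 by linarith
qed

lemma center_in_hball: "(k, v) \<in> VX \<Longrightarrow> v \<in> HB k v"
  using V_subset[of k] powi_pos[of k] by (auto simp: hyp_vertices_def hball_def)

lemma dist_le_of_closure_hball:
  assumes "p \<in> closure (HB k v)"
  shows "dist v p \<le> 2 * r powi k"
proof -
  have "HB k v \<subseteq> cball v (2 * r powi k)" by (auto simp: hball_def dist_commute)
  then have "closure (HB k v) \<subseteq> cball v (2 * r powi k)" by (intro closure_minimal) auto
  then show ?thesis using assms by auto
qed

lemma hball_subset_bigB:
  "u \<in> V (int j + 1) \<Longrightarrow> HB (int j + 1) u \<inter> U \<noteq> {} \<Longrightarrow> HB (int j + 1) u \<subseteq> BB j U"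
  unfolding bigB_def by blast

lemma mem_bigB_if_near:
  assumes "U \<subseteq> Z" "p \<in> U" "q \<in> Z" "dist p q < r powi (int j + 1)"
  shows "q \<in> BB j U"
proof -
  have "k0 \<le> int j + 1" using k0_le_0 by linarith
  then obtain u where u: "u \<in> V (int j + 1)" "dist p u < r powi (int j + 1)"
    using V_dense[of _ p] assms by blast
  have "dist q u \<le> dist p q + dist p u" by (metis dist_commute dist_triangle)
  then have "q \<in> HB (int j + 1) u" using u assms by (simp add: hball_def)
  moreover have "p \<in> HB (int j + 1) u"
    using u assms powi_pos[of "int j + 1"] by (auto simp: hball_def dist_commute)
  ultimately show ?thesis using u assms hball_subset_bigB by blast
qed

lemma subset_bigB: "U \<subseteq> Z \<Longrightarrow> U \<subseteq> BB j U"
  using mem_bigB_if_near[of U _ _ j] powi_pos by fastforce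

lemma touching_hball_subset_bigB:
  assumes p0: "p0 \<in> closure (HB k v)" "p0 \<in> closure (HB k w)"
    and W: "W \<subseteq> Z" "w \<in> W" and mk: "int m \<le> k - 2"
  shows "HB k v \<subseteq> BB m W"
proof
  fix q assume q: "q \<in> HB k v"
  have "dist w v \<le> 4 * r powi k"
    using dist_le_of_closure_hball[OF p0(1)] dist_le_of_closure_hball[OF p0(2)]
      dist_triangle[of w v p0] by (simp add: dist_commute)
  moreover have "dist v q < 2 * r powi k" using q by (auto simp: hball_def dist_commute)
  moreover have "dist w q \<le> dist w v + dist v q" by (rule dist_triangle)
  ultimately have "dist w q < 6 * r powi k" by linarith
  also have "\<dots> \<le> 6 * r powi (int m + 2)" using powi_antimono[of "int m + 2" k] mk by simp
  also have "\<dots> = 6 * r * r powi (int m + 1)"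
    using powi_Suc[of "int m + 1"] by (simp add: add.assoc)
  also have "\<dots> \<le> r powi (int m + 1)"
    using r_le r_pos powi_pos[of "int m + 1"] by (intro mult_left_le_one_le) auto
  finally show "q \<in> BB m W" using mem_bigB_if_near[OF W] q by (auto simp: hball_def)
qed

lemma touching_bigB_meets_hball:
  assumes x: "(k, v) \<in> VX" "(k, w) \<in> VX"
    and p0: "p0 \<in> Z" "p0 \<in> closure (HB k v)" "p0 \<in> closure (HB k w)"
    and W: "W \<subseteq> Z" "HB k w \<subseteq> W" and mk: "int m \<le> k - 1"
  shows "BB m W \<inter> HB k v \<noteq> {}"
proof (cases "int m = k - 1")
  case True
  \<comment> \<open>a vertex u of level k near p0 has a ball meeting both B(v) and B(w)\<close>
  have "k0 \<le> k" using x by (simp add: hyp_vertices_def)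
  then obtain u where u: "u \<in> V k" "dist p0 u < r powi k" using V_dense p0(1) by blast
  obtain p where p: "p \<in> HB k w" "dist p p0 < r powi k"
    using p0(3) powi_pos[of k] unfolding closure_approachable by blast
  obtain p' where p': "p' \<in> HB k v" "dist p' p0 < r powi k"
    using p0(2) powi_pos[of k] unfolding closure_approachable by blast
  have "dist p u \<le> dist p p0 + dist p0 u" "dist p' u \<le> dist p' p0 + dist p0 u"
    by (rule dist_triangle)+
  then have "p \<in> HB k u" "p' \<in> HB k u" using p p' u by (auto simp: hball_def)
  moreover have "k = int m + 1" using True by simp
  ultimately have "HB k u \<subseteq> BB m W" using hball_subset_bigB[of u m W] u W p by auto
  then show ?thesis using \<open>p' \<in> HB k u\<close> p' by blast
next
  case False
  then have "HB k v \<subseteq> BB m W"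
    using touching_hball_subset_bigB[OF p0(2,3) W(1)] W(2) center_in_hball[OF x(2)] mk by force
  then show ?thesis using center_in_hball[OF x(1)] by blast
qed

lemma parent_vertex:
  assumes "k0 \<le> k" "v \<in> V (k + 1)"
  obtains u where "u \<in> V k" "HB (k + 1) v \<subseteq> HB k u"
proof -
  obtain u where u: "u \<in> V k" "dist v u < r powi k"
    using V_dense assms V_subset[of "k + 1"] by fastforce
  have "HB (k + 1) v \<subseteq> HB k u"
  proof
    fix q assume q: "q \<in> HB (k + 1) v"
    have "dist q u \<le> dist q v + dist v u" by (rule dist_triangle)
    also have "\<dots> < 2 * (r * r powi k) + r powi k"
      using q u powi_Suc[of k] by (auto simp: hball_def)
    also have "\<dots> \<le> 2 * r powi k" using r_le powi_pos[of k] by (simp add: field_simps)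
    finally show "q \<in> HB k u" using q by (auto simp: hball_def)
  qed
  with u that show ?thesis by blast
qed

lemma symp_hyp_adj: "symp HADJ"
  unfolding hyp_adj_def symp_def by (simp add: Int_ac disj_commute eq_commute[of "_::int"])

lemma reachable_from_root:
  assumes "v0 \<in> V k0" "k0 \<le> k"
  shows "v \<in> V k \<Longrightarrow> HADJ\<^sup>*\<^sup>* (k0, v0) (k, v)"
  using assms(2)
proof (induction k arbitrary: v rule: int_ge_induct)
  case base
  then have "v = v0" using V_k0_unique assms(1) by blast
  then show ?case by simp
next
  case (step k)
  obtain u where u: "u \<in> V k" "HB (k + 1) v \<subseteq> HB k u"
    using parent_vertex[OF \<open>k0 \<le> k\<close> step.prems] .
  then have "HADJ (k, u) (k + 1, v)"
    using step unfolding hyp_adj_def hyp_vertices_def by simp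
  with step.IH[OF u(1)] show ?case by (rule rtranclp.rtrancl_into_rtrancl)
qed

lemma hyp_connected:
  assumes "x \<in> VX" "y \<in> VX"
  shows "HADJ\<^sup>*\<^sup>* x y"
proof -
  obtain v0 where v0: "v0 \<in> V k0" using two V_dense[of k0] by blast
  have "HADJ\<^sup>*\<^sup>* (k0, v0) x" "HADJ\<^sup>*\<^sup>* (k0, v0) y"
    using assms reachable_from_root[OF v0] by (auto simp: hyp_vertices_def)
  then have "HADJ\<^sup>*\<^sup>* x (k0, v0)" "HADJ\<^sup>*\<^sup>* (k0, v0) y"
    using sympD[OF symp_rtranclp[OF symp_hyp_adj]] by blast+
  then show ?thesis by (rule rtranclp_trans)
qed


end

locale colored_tree = hyperbolic_approximation Z r V
  for Z :: "'a::metric_space set" and r V +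
  fixes \<U> :: "nat \<Rightarrow> 'c \<Rightarrow> 'a set set" and c :: 'c
  assumes U_sub: "\<And>j U. U \<in> \<U> j c \<Longrightarrow> U \<subseteq> Z"
    and U_disj: "\<And>j. pairwise disjnt (\<U> j c)"
    and U_0: "\<U> 0 c = {Z}"
    and U_nest: "\<And>j j' U U'. U \<in> \<U> j c \<Longrightarrow> U' \<in> \<U> j' c \<Longrightarrow> j' \<le> j \<Longrightarrow>
                   (j, U) \<noteq> (j', U') \<Longrightarrow> BB j U \<subseteq> U' \<or> BB j U \<inter> U' = {}"
begin

abbreviation "F \<equiv> fmap Z r \<U> c"
abbreviation "TA \<equiv> tree_adj \<U> c"
abbreviation "TAnc \<equiv> tree_ancestor \<U> c"

lemma bigB_subset_if_meets:
  "U \<in> \<U> j c \<Longrightarrow> U' \<in> \<U> j' c \<Longrightarrow> j' \<le> j \<Longrightarrow> (j, U) \<noteq> (j', U') \<Longrightarrow> BB j U \<inter> U' \<noteq> {}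
    \<Longrightarrow> BB j U \<subseteq> U'"
  using U_nest by blast

lemma tree_sets_nested:
  assumes U: "U \<in> \<U> j c" and U': "U' \<in> \<U> j' c" and "j' \<le> j" "U \<inter> U' \<noteq> {}"
  shows "(j = j' \<and> U = U') \<or> (j' < j \<and> U \<subseteq> U')"
proof (cases "(j, U) = (j', U')")
  case False
  have "U \<subseteq> BB j U" using subset_bigB U_sub[OF U] .
  then have "BB j U \<subseteq> U'" using bigB_subset_if_meets[OF U U' \<open>j' \<le> j\<close> False] assms(4) by blast
  with \<open>U \<subseteq> BB j U\<close> have "U \<subseteq> U'" by blast
  moreover have "j \<noteq> j'"
  proof
    assume "j = j'"
    with False U U' U_disj[of j] have "disjnt U U'" unfolding pairwise_def by auto
    with \<open>U \<inter> U' \<noteq> {}\<close> show False by (simp add: disjnt_def)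
  qed
  ultimately show ?thesis using \<open>j' \<le> j\<close> by simp
qed auto

lemma tree_ancestor_iff:
  "TAnc (m, W) (b, Y) \<longleftrightarrow> W \<in> \<U> m c \<and> Y \<in> \<U> b c \<and> m < b \<and> Y \<subseteq> W"
  by (simp add: tree_ancestor_def tree_vertices_def)

lemma tree_adjI:
  assumes "TAnc P Q" "\<And>m W. TAnc (m, W) Q \<Longrightarrow> m \<le> fst P"
  shows "TA P Q"
  unfolding tree_adj_def using assms by (metis prod.collapse)

lemma tree_adj_sym: "TA P Q \<Longrightarrow> TA Q P"
  unfolding tree_adj_def by blast

lemma parent_exists:
  assumes Y: "Y \<in> \<U> b c" and "0 < b"
  obtains m P where "TAnc (m, P) (b, Y)" "\<And>m' W. TAnc (m', W) (b, Y) \<Longrightarrow> m' \<le> m"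
proof -
  define Q where "Q m \<longleftrightarrow> (\<exists>W. TAnc (m, W) (b, Y))" for m
  have "Q 0" unfolding Q_def using U_0 \<open>0 < b\<close> U_sub[OF Y] Y
    by (intro exI[of _ Z]) (simp add: tree_ancestor_iff)
  moreover have bound: "Q m \<Longrightarrow> m \<le> b" for m by (auto simp: Q_def tree_ancestor_iff)
  ultimately have "Q (GREATEST m. Q m)" by (rule GreatestI_nat)
  moreover have "Q m' \<Longrightarrow> m' \<le> (GREATEST m. Q m)" for m' using bound by (metis Greatest_le_nat)
  ultimately show thesis using that unfolding Q_def by blast
qed

definition within_two :: "nat \<times> 'a set \<Rightarrow> nat \<times> 'a set \<Rightarrow> bool" where
  "within_two P Q \<longleftrightarrow> P = Q \<or> TA P Q \<or> (\<exists>W. TA P W \<and> TA W Q)"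

lemma within_two_sym: "within_two P Q \<Longrightarrow> within_two Q P"
  unfolding within_two_def using tree_adj_sym by blast

lemma within_two_relpowp: "within_two P Q \<Longrightarrow> \<exists>m\<le>2. (TA ^^ m) P Q"
  unfolding within_two_def
proof (elim disjE exE conjE)
  assume "P = Q" then show ?thesis by (intro exI[of _ 0]) auto
next
  assume "TA P Q" then show ?thesis by (intro exI[of _ 1]) auto
next
  fix W assume "TA P W" "TA W Q"
  then have "(TA ^^ 2) P Q" by (auto simp: numeral_2_eq_2 relpowp_Suc_I2)
  then show ?thesis by blast
qed

lemma within_two_if_single_intermediate_level:
  assumes X: "X \<in> \<U> a c" and Y: "Y \<in> \<U> b c" "Y \<noteq> {}"
    and rel: "(a = b \<and> X = Y) \<or> (a < b \<and> Y \<subseteq> X)"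
    and single: "\<And>m1 W1 m2 W2. TAnc (m1, W1) (b, Y) \<Longrightarrow> TAnc (m2, W2) (b, Y) \<Longrightarrow>
                   a < m1 \<Longrightarrow> m1 < m2 \<Longrightarrow> False"
  shows "within_two (a, X) (b, Y)"
proof (cases "a = b \<and> X = Y")
  case True
  then show ?thesis by (simp add: within_two_def)
next
  case False
  then have ab: "a < b" "Y \<subseteq> X" using rel by auto
  show ?thesis
  proof (cases "\<exists>m W. TAnc (m, W) (b, Y) \<and> a < m")
    case True
    then obtain m W where mW: "TAnc (m, W) (b, Y)" "a < m" by blast
    then have W: "W \<in> \<U> m c" "Y \<subseteq> W" by (auto simp: tree_ancestor_iff)
    have "TA (m, W) (b, Y)"
      using mW single by (intro tree_adjI) (auto intro: le_less_trans simp: not_le[symmetric])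
    moreover have "TA (a, X) (m, W)"
    proof (rule tree_adjI)
      have "W \<inter> X \<noteq> {}" using W ab Y(2) by blast
      then have "W \<subseteq> X" using tree_sets_nested[OF W(1) X] mW(2) by auto
      then show "TAnc (a, X) (m, W)" using X W mW(2) by (simp add: tree_ancestor_iff)
    next
      fix m' W' assume "TAnc (m', W') (m, W)"
      then have "TAnc (m', W') (b, Y)" "m' < m" using W Y(1) mW(1) by (auto simp: tree_ancestor_iff)
      then show "m' \<le> fst (a, X)" using single[of m' W' m W] mW by fastforce
    qed
    ultimately show ?thesis unfolding within_two_def by blast
  next
    case False
    then have "TA (a, X) (b, Y)"
      using X Y ab by (intro tree_adjI) (auto simp: tree_ancestor_iff not_less[symmetric])
    then show ?thesis unfolding within_two_def by blast
  qed
qed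

text \<open>The characterisation of f_c(k, v) = (a, X); as k0 \<le> 0 it also holds at the root,
  where (a, X) = (0, Z).\<close>
definition fmap_spec :: "int \<Rightarrow> 'a \<Rightarrow> nat \<Rightarrow> 'a set \<Rightarrow> bool" where
  "fmap_spec k v a X \<longleftrightarrow> int a \<le> max (k - 1) 0 \<and> X \<in> \<U> a c \<and> HB k v \<subseteq> X \<and>
     (\<forall>j U. int j \<le> max (k - 1) 0 \<longrightarrow> U \<in> \<U> j c \<longrightarrow> HB k v \<subseteq> U \<longrightarrow> j \<le> a)"

lemma fmap_specE:
  assumes x: "(k, v) \<in> VX"
  obtains a X where "F (k, v) = (a, X)" "fmap_spec k v a X"
proof -
  define Q where "Q j \<longleftrightarrow> int j \<le> max (k - 1) 0 \<and> (\<exists>U\<in>\<U> j c. HB k v \<subseteq> U)" for j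
  have "Q 0" using U_0 by (auto simp: Q_def hball_def)
  moreover have bound: "Q j \<Longrightarrow> j \<le> nat (max (k - 1) 0)" for j by (auto simp: Q_def)
  ultimately have Qa: "Q (GREATEST j. Q j)" by (rule GreatestI_nat)
  define a where "a = (GREATEST j. Q j)"
  have amax: "Q j \<Longrightarrow> j \<le> a" for j unfolding a_def using bound by (metis Greatest_le_nat)
  obtain X where X: "X \<in> \<U> a c" "HB k v \<subseteq> X" using Qa by (auto simp: Q_def a_def)
  have spec: "fmap_spec k v a X" using Qa X amax by (auto simp: fmap_spec_def Q_def a_def)
  show thesis
  proof (cases "k = k0")
    case True
    then have "max (k - 1) 0 = 0" using k0_le_0 by linarith
    then have "a = 0" "X = Z" using Qa X U_0 by (auto simp: Q_def a_def)
    with True spec that show thesis by (simp add: fmap_def)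
  next
    case False
    have "(THE U. U \<in> \<U> a c \<and> HB k v \<subseteq> U) = X"
      using the_disjoint_member_eq[OF U_disj X] center_in_hball[OF x] by blast
    with False spec that show thesis by (simp add: fmap_def Let_def a_def Q_def)
  qed
qed

lemma within_two_if_ancestors_cover:
  assumes fx: "fmap_spec k v a X" and Y: "Y \<in> \<U> b c" "Y \<noteq> {}" "int b \<le> max k 0"
    and rel: "(a = b \<and> X = Y) \<or> (a < b \<and> Y \<subseteq> X)"
    and cover: "\<And>m W. TAnc (m, W) (b, Y) \<Longrightarrow> HB k v \<subseteq> BB m W"
  shows "within_two (a, X) (b, Y)"
proof (rule within_two_if_single_intermediate_level[OF _ Y(1,2) rel])
  show "X \<in> \<U> a c" using fx by (simp add: fmap_spec_def)
  fix m1 W1 m2 W2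
  assume A1: "TAnc (m1, W1) (b, Y)" and A2: "TAnc (m2, W2) (b, Y)" and "a < m1" "m1 < m2"
  have W1: "W1 \<in> \<U> m1 c" "Y \<subseteq> W1" and W2: "W2 \<in> \<U> m2 c" "Y \<subseteq> W2" "m2 < b"
    using A1 A2 by (auto simp: tree_ancestor_iff)
  have "BB m2 W2 \<inter> W1 \<noteq> {}" using subset_bigB[OF U_sub[OF W2(1)]] W1 W2 Y(2) by blast
  then have "BB m2 W2 \<subseteq> W1"
    using bigB_subset_if_meets[OF W2(1) W1(1)] \<open>m1 < m2\<close> by force
  with cover[OF A2] have "HB k v \<subseteq> W1" by blast
  moreover have "int m1 \<le> max (k - 1) 0" using \<open>m1 < m2\<close> W2(3) Y(3) by linarith
  ultimately have "m1 \<le> a" using fx W1(1) by (auto simp: fmap_spec_def)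
  with \<open>a < m1\<close> show False by simp
qed

lemma radial_within_two:
  assumes x: "(k, v) \<in> VX" and y: "(k + 1, w) \<in> VX" and sub: "HB (k + 1) w \<subseteq> HB k v"
  shows "within_two (F (k, v)) (F (k + 1, w))"
proof -
  obtain a X where fx: "F (k, v) = (a, X)" "fmap_spec k v a X" using fmap_specE[OF x] .
  obtain b Y where fy: "F (k + 1, w) = (b, Y)" "fmap_spec (k + 1) w b Y" using fmap_specE[OF y] .
  have X: "X \<in> \<U> a c" "HB k v \<subseteq> X" "int a \<le> max (k - 1) 0"
    using fx(2) by (auto simp: fmap_spec_def)
  have Y: "Y \<in> \<U> b c" "HB (k + 1) w \<subseteq> Y" "int b \<le> max k 0"
    using fy(2) by (auto simp: fmap_spec_def)
  have w: "w \<in> HB (k + 1) w" using center_in_hball[OF y] .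
  have "a \<le> b" using fy(2) X sub by (auto simp: fmap_spec_def)
  moreover have "Y \<inter> X \<noteq> {}" using w sub X Y by blast
  ultimately have rel: "(a = b \<and> X = Y) \<or> (a < b \<and> Y \<subseteq> X)"
    using tree_sets_nested[OF Y(1) X(1)] by auto
  have "within_two (a, X) (b, Y)"
  proof (rule within_two_if_ancestors_cover[OF fx(2) Y(1) _ Y(3) rel])
    show "Y \<noteq> {}" using w Y by blast
    fix m W assume "TAnc (m, W) (b, Y)"
    then have W: "W \<in> \<U> m c" "w \<in> W" "int m \<le> k - 1"
      using w Y by (auto simp: tree_ancestor_iff)
    show "HB k v \<subseteq> BB m W"
    proof (cases "int m = k - 1")
      case True
      then show ?thesis
        using hball_subset_bigB[of v m W] x W w sub by (auto simp: hyp_vertices_def)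
    next
      case False
      have "w \<in> HB k w" using w powi_pos[of k] by (simp add: hball_def)
      with w sub have "w \<in> closure (HB k v)" "w \<in> closure (HB k w)"
        using closure_subset by blast+
      moreover have "int m \<le> k - 2" using W(3) False by linarith
      ultimately show ?thesis using touching_hball_subset_bigB U_sub[OF W(1)] W(2) by blast
    qed
  qed
  with fx fy show ?thesis by simp
qed

lemma touching_subset_ancestor:
  assumes x: "(k, v) \<in> VX" "(k, w) \<in> VX"
    and p0: "p0 \<in> Z" "p0 \<in> closure (HB k v)" "p0 \<in> closure (HB k w)"
    and Y: "Y \<in> \<U> b c" "HB k w \<subseteq> Y" "int b \<le> k - 1"
    and Q: "Q \<in> \<U> m c" "m < b" "HB k v \<subseteq> Q"
  shows "Y \<subseteq> Q"
proof -
  have "BB b Y \<inter> HB k v \<noteq> {}" using touching_bigB_meets_hball[OF x p0 U_sub[OF Y(1)] Y(2,3)] .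
  then have "BB b Y \<inter> Q \<noteq> {}" using Q(3) by blast
  then have "BB b Y \<subseteq> Q" using bigB_subset_if_meets[OF Y(1) Q(1)] Q(2) by force
  then show ?thesis using subset_bigB[OF U_sub[OF Y(1)]] by blast
qed

lemma horizontal_disjoint_within_two:
  assumes x: "(k, v) \<in> VX" "(k, w) \<in> VX"
    and p0: "p0 \<in> Z" "p0 \<in> closure (HB k v)" "p0 \<in> closure (HB k w)"
    and fx: "fmap_spec k v a X" and fy: "fmap_spec k w b Y" and "2 \<le> k" "a \<le> b"
    and disj: "Y \<inter> X = {}"
  shows "within_two (a, X) (b, Y)"
proof -
  have X: "X \<in> \<U> a c" "HB k v \<subseteq> X" "int a \<le> k - 1"
    using fx \<open>2 \<le> k\<close> by (auto simp: fmap_spec_def)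
  have Y: "Y \<in> \<U> b c" "HB k w \<subseteq> Y" "int b \<le> k - 1"
    using fy \<open>2 \<le> k\<close> by (auto simp: fmap_spec_def)
  have vX: "v \<in> X" and wY: "w \<in> Y" using center_in_hball x X Y by blast+
  have "0 < b"
  proof (rule ccontr)
    assume "\<not> 0 < b"
    then have "Y = Z" using Y(1) U_0 by simp
    then show False using U_sub[OF X(1)] vX disj by blast
  qed
  then obtain m P where P: "TAnc (m, P) (b, Y)"
    and mmax: "\<And>m' W. TAnc (m', W) (b, Y) \<Longrightarrow> m' \<le> m"
    using parent_exists[OF Y(1)] by blast
  have P': "P \<in> \<U> m c" "Y \<subseteq> P" "m < b" using P by (auto simp: tree_ancestor_iff)
  have "m < a"
  proof (rule ccontr)
    assume "\<not> m < a"
    have "HB k v \<subseteq> BB m P"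
      using touching_hball_subset_bigB[OF p0(2,3) U_sub[OF P'(1)]] P' wY Y(3) by force
    then have "BB m P \<inter> X \<noteq> {}" using X(2) center_in_hball[OF x(1)] by blast
    moreover have "(m, P) \<noteq> (a, X)" using P'(2) disj wY by blast
    ultimately have "BB m P \<subseteq> X" using bigB_subset_if_meets[OF P'(1) X(1)] \<open>\<not> m < a\<close> by force
    then show False using subset_bigB[OF U_sub[OF P'(1)]] P'(2) disj wY by blast
  qed
  have "X \<subseteq> P"
    using touching_subset_ancestor[OF x(2,1) p0(1,3,2) X P'(1) \<open>m < a\<close>] Y(2) P'(2) by blast
  have "TA (m, P) (a, X)"
  proof (rule tree_adjI)
    show "TAnc (m, P) (a, X)" using \<open>X \<subseteq> P\<close> P' X \<open>m < a\<close> by (simp add: tree_ancestor_iff)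
  next
    fix m' Q assume "TAnc (m', Q) (a, X)"
    then have Q: "Q \<in> \<U> m' c" "X \<subseteq> Q" "m' < b" using \<open>a \<le> b\<close> by (auto simp: tree_ancestor_iff)
    then have "Y \<subseteq> Q" using touching_subset_ancestor[OF x p0 Y Q(1,3)] X(2) by blast
    then show "m' \<le> fst (m, P)" using mmax Q Y(1) by (simp add: tree_ancestor_iff)
  qed
  moreover have "TA (m, P) (b, Y)" using P mmax by (intro tree_adjI) auto
  ultimately show ?thesis using tree_adj_sym unfolding within_two_def by blast
qed

lemma horizontal_within_two_ordered:
  assumes x: "(k, v) \<in> VX" "(k, w) \<in> VX"
    and p0: "p0 \<in> Z" "p0 \<in> closure (HB k v)" "p0 \<in> closure (HB k w)"
    and fx: "fmap_spec k v a X" and fy: "fmap_spec k w b Y" and "2 \<le> k" "a \<le> b"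
  shows "within_two (a, X) (b, Y)"
proof (cases "Y \<inter> X = {}")
  case True
  then show ?thesis by (rule horizontal_disjoint_within_two[OF assms])
next
  case False
  have X: "X \<in> \<U> a c" using fx by (simp add: fmap_spec_def)
  have Y: "Y \<in> \<U> b c" "HB k w \<subseteq> Y" "int b \<le> k - 1"
    using fy \<open>2 \<le> k\<close> by (auto simp: fmap_spec_def)
  have wY: "w \<in> Y" using center_in_hball[OF x(2)] Y(2) by blast
  have rel: "(a = b \<and> X = Y) \<or> (a < b \<and> Y \<subseteq> X)"
    using tree_sets_nested[OF Y(1) X \<open>a \<le> b\<close>] False by auto
  show ?thesis
  proof (rule within_two_if_ancestors_cover[OF fx Y(1) _ _ rel])
    show "Y \<noteq> {}" using wY by blast
    show "int b \<le> max k 0" using Y(3) by linarith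
    fix m W assume "TAnc (m, W) (b, Y)"
    then have "W \<subseteq> Z" "w \<in> W" "int m \<le> k - 2"
      using U_sub wY Y(3) by (auto simp: tree_ancestor_iff)
    then show "HB k v \<subseteq> BB m W" using touching_hball_subset_bigB[OF p0(2,3)] by blast
  qed
qed

lemma horizontal_within_two:
  assumes x: "(k, v) \<in> VX" "(k, w) \<in> VX"
    and p0: "p0 \<in> Z" "p0 \<in> closure (HB k v)" "p0 \<in> closure (HB k w)"
  shows "within_two (F (k, v)) (F (k, w))"
proof -
  obtain a X where fx: "F (k, v) = (a, X)" "fmap_spec k v a X" using fmap_specE[OF x(1)] .
  obtain b Y where fy: "F (k, w) = (b, Y)" "fmap_spec k w b Y" using fmap_specE[OF x(2)] .
  show ?thesis
  proof (cases "2 \<le> k")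
    case False
    then have "a = 0 \<and> X = Z" "b = 0 \<and> Y = Z" using fx(2) fy(2) U_0 by (auto simp: fmap_spec_def)
    with fx fy show ?thesis by (simp add: within_two_def)
  next
    case True
    consider "a \<le> b" | "b \<le> a" by linarith
    then show ?thesis
    proof cases
      case 1
      then show ?thesis using horizontal_within_two_ordered[OF x p0 fx(2) fy(2) True] fx fy by simp
    next
      case 2
      then show ?thesis
        using horizontal_within_two_ordered[OF x(2,1) p0(1,3,2) fy(2) fx(2) True] fx fy within_two_sym
        by simp
    qed
  qed
qed

lemma hyp_adj_within_two:
  assumes "HADJ x y"
  shows "within_two (F x) (F y)"
proof -
  obtain k v k' w where xy: "x = (k, v)" "y = (k', w)" by fastforce
  have vx: "(k, v) \<in> VX" "(k', w) \<in> VX" using assms xy by (auto simp: hyp_adj_def)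
  consider (horizontal) "k = k'" "Z \<inter> closure (HB k v) \<inter> closure (HB k' w) \<noteq> {}"
    | (down) "k' = k + 1" "HB k' w \<subseteq> HB k v"
    | (up) "k = k' + 1" "HB k v \<subseteq> HB k' w"
    using assms xy unfolding hyp_adj_def by auto
  then show ?thesis
  proof cases
    case horizontal
    then obtain p0 where "p0 \<in> Z" "p0 \<in> closure (HB k v)" "p0 \<in> closure (HB k w)" by blast
    then show ?thesis using horizontal_within_two[of k v w p0] vx horizontal xy by simp
  next
    case down
    then show ?thesis using radial_within_two[of k v w] vx xy by simp
  next
    case up
    then show ?thesis using radial_within_two[of k' w v] vx xy within_two_sym by simp
  qed
qed

lemma fmap_graph_dist_le:
  assumes "x \<in> VX" "y \<in> VX"
  shows "graph_dist TA (F x) (F y) \<le> 2 * graph_dist HADJ x y"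
  by (rule graph_dist_map_le[OF hyp_connected[OF assms]])
    (rule within_two_relpowp[OF hyp_adj_within_two])

end

theorem lemma6p2:
  fixes Z :: "'a::metric_space set" and r :: real and n :: nat
    and V :: "int \<Rightarrow> 'a set" and C :: "'c set" and \<U> :: "nat \<Rightarrow> 'c \<Rightarrow> 'a set set"
  assumes bdd: "bounded Z"
    and two: "\<exists>x\<in>Z. \<exists>y\<in>Z. x \<noteq> y"
    and r_pos: "0 < r" and r_le: "r \<le> 1/6"
    and V_max: "\<And>k. hyp_k0 Z r \<le> k \<Longrightarrow> maximal_separated Z (r powi k) (V k)"
    and cdim: "has_cdim Z n"
    and r_small: "r < min (diameter Z) (1 / diameter Z)"
    and C_fin: "finite C" and C_card: "card C = n + 1"
    and U_open: "\<And>j c U. c \<in> C \<Longrightarrow> U \<in> \<U> j c \<Longrightarrow> openin (top_of_set Z) U"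
    and U_disj: "\<And>j c. c \<in> C \<Longrightarrow> pairwise disjnt (\<U> j c)"
    and U_cover: "\<And>j. \<Union>(\<Union>c\<in>C. \<U> j c) = Z"
    and U_0: "\<And>c. c \<in> C \<Longrightarrow> \<U> 0 c = {Z}"
    and U_mesh: "\<And>j. j \<ge> 1 \<Longrightarrow> Sup (diameter ` (\<Union>c\<in>C. \<U> j c)) < r ^ j"
    and U_ball: "\<And>j v. v \<in> V (int j + 1) \<Longrightarrow> \<exists>U\<in>(\<Union>c\<in>C. \<U> j c). hball Z r (int j + 1) v \<subseteq> U"
    and U_nest: "\<And>c j j' U U'. c \<in> C \<Longrightarrow> U \<in> \<U> j c \<Longrightarrow> U' \<in> \<U> j' c \<Longrightarrow> j' \<le> j \<Longrightarrow>
                   (j, U) \<noteq> (j', U') \<Longrightarrow> bigB Z r V j U \<subseteq> U' \<or> bigB Z r V j U \<inter> U' = {}"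
  shows "\<forall>c\<in>C. \<forall>x\<in>hyp_vertices Z r V. \<forall>y\<in>hyp_vertices Z r V.
           graph_dist (tree_adj \<U> c) (fmap Z r \<U> c x) (fmap Z r \<U> c y)
             \<le> 2 * graph_dist (hyp_adj Z r V) x y"
proof (intro ballI)
  fix c x y
  assume c: "c \<in> C" and x: "x \<in> hyp_vertices Z r V" and y: "y \<in> hyp_vertices Z r V"
  interpret colored_tree Z r V \<U> c
    using bdd two r_pos r_le V_max r_small U_disj[OF c] U_0[OF c] U_nest[OF c]
      openin_subset[OF U_open[OF c]]
    by unfold_locales auto
  show "graph_dist (tree_adj \<U> c) (fmap Z r \<U> c x) (fmap Z r \<U> c y)
          \<le> 2 * graph_dist (hyp_adj Z r V) x y"
    using fmap_graph_dist_le[OF x y] .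
qed

end
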